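(* Let $X$ be a non-empty set and let $\mathcal{U}\subseteq P(X)$ be anti-closed under arbitrary unions. Then $\mathcal{U}$ is anti-closed under finite intersections.
   Context: For a family $\mathcal{U}\subseteq P(X)$: $\mathcal{U}$ is anti-closed under finite intersections if for every $n\in\mathbb{N}$ and all $A_1,\dots,A_n\in\mathcal{U}$ that are not all equal, $\bigcap_{i=1}^n A_i\notin\mathcal{U}$; $\mathcal{U}$ is anti-closed under arbitrary intersections if for every non-empty index set $J$ and all $A_i\in\mathcal{U}$ ($i\in J$) not all equal, $\bigcap_{i\in J}A_i\notin\mathcal{U}$; $\mathcal{U}$ is anti-closed under arbitrary unions if for every non-empty index set $J$ and all $A_i\in\mathcal{U}$ ($i\in J$) not all equal, $\bigcup_{i\in J}A_i\notin\mathcal{U}$. *)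

theory Defs
  imports Main
begin

definition anti_closed_fin_inter :: "'a set set \<Rightarrow> bool" where
  "anti_closed_fin_inter U \<longleftrightarrow>
     (\<forall>(n::nat) (A :: nat \<Rightarrow> 'a set).
        (\<forall>i\<in>{1..n}. A i \<in> U) \<and> (\<exists>i\<in>{1..n}. \<exists>j\<in>{1..n}. A i \<noteq> A j)
        \<longrightarrow> (\<Inter>i\<in>{1..n}. A i) \<notin> U)"

text \<open>An indexed family
  (A_i), i in J, is represented by its set of members F = {A_i | i in J};
  "not all equal" means F has two distinct members (which also forces J non-empty).\<close>
definition anti_closed_arb_union :: "'a set set \<Rightarrow> bool" where
  "anti_closed_arb_union U \<longleftrightarrow>
     (\<forall>F. F \<subseteq> U \<and> (\<exists>A\<in>F. \<exists>B\<in>F. A \<noteq> B) \<longrightarrow> \<Union>F \<notin> U)"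

end

theory Submission
  imports Defs
begin

text \<open>Anti-closure under unions already forbids \<open>A \<subset> B\<close> inside \<open>U\<close>, since then
  \<open>A \<union> B = B\<close>; so \<open>U\<close> is an antichain. An intersection of members that are not all
  equal lies below two distinct members, and in an antichain it would have to equal both.\<close>

lemma anti_closed_arb_union_subset_eq:
  assumes "anti_closed_arb_union U" "A \<in> U" "B \<in> U" "A \<subseteq> B"
  shows "A = B"
proof (rule ccontr)
  assume "A \<noteq> B"
  with assms(2,3) have "{A, B} \<subseteq> U \<and> (\<exists>C\<in>{A, B}. \<exists>D\<in>{A, B}. C \<noteq> D)"
    by auto
  with assms(1) have "\<Union>{A, B} \<notin> U"
    unfolding anti_closed_arb_union_def by (metis (no_types))
  moreover have "\<Union>{A, B} = B" using assms(4) by blast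
  ultimately show False using assms(3) by simp
qed

lemma anti_closed_fin_inter_if_antichain:
  assumes antichain: "\<And>A B. A \<in> U \<Longrightarrow> B \<in> U \<Longrightarrow> A \<subseteq> B \<Longrightarrow> A = B"
  shows "anti_closed_fin_inter U"
  unfolding anti_closed_fin_inter_def
proof (intro allI impI notI)
  fix n and A :: "nat \<Rightarrow> 'a set"
  assume members: "(\<forall>i\<in>{1..n}. A i \<in> U) \<and> (\<exists>i\<in>{1..n}. \<exists>j\<in>{1..n}. A i \<noteq> A j)"
    and inter_in: "(\<Inter>i\<in>{1..n}. A i) \<in> U"
  then obtain i j where i: "i \<in> {1..n}" and j: "j \<in> {1..n}" and "A i \<noteq> A j"
    by meson
  moreover have "(\<Inter>k\<in>{1..n}. A k) = A i"
    by (rule antichain[OF inter_in]) (use members i in auto)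
  moreover have "(\<Inter>k\<in>{1..n}. A k) = A j"
    by (rule antichain[OF inter_in]) (use members j in auto)
  ultimately show False by simp
qed

theorem mainTheorem5:
  fixes X :: "'a set" and U :: "'a set set"
  assumes "X \<noteq> {}"
    and "U \<subseteq> Pow X"
    and "anti_closed_arb_union U"
  shows "anti_closed_fin_inter U"
  by (rule anti_closed_fin_inter_if_antichain)
    (rule anti_closed_arb_union_subset_eq[OF assms(3)])

end
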